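(* Let $\phi$ be a constant Drinfeld $A[\underline{t}_s]$-module of rank $r\ge1$, i.e. $\phi_\theta=\theta+A_1\tau+\dots+A_r\tau^r$ with all $A_i\in\mathbb{C}_\infty$, $A_r\neq0$, and suppose $\lambda_1,\dots,\lambda_r\in\mathbb{C}_\infty$ form an $A$-basis of the kernel of $\exp_\phi:\mathbb{C}_\infty\to\mathbb{C}_\infty$ (the period lattice of $\phi$ viewed as a Drinfeld $A$-module over $\mathbb{C}_\infty$). Then $\lambda_1,\dots,\lambda_r$ form an $A[\underline{t}_s]$-basis of $\Lambda_\phi=\ker(\exp_\phi:\mathbb{T}_s\to\mathbb{T}_s)$.
   Context: $\mathbb{F}_q$ finite field, $\theta,t_1,\dots,t_s$ independent variables, $A=\mathbb{F}_q[\theta]$, $A[\underline{t}_s]=\mathbb{F}_q[\theta,t_1,\dots,t_s]$, $\mathbb{F}_q[\underline{t}_s]=\mathbb{F}_q[t_1,\dots,t_s]$. $\mathbb{C}_\infty$: completion of an algebraic closure of $\mathbb{F}_q((1/\theta))$. $\mathbb{T}_s$: Tate algebra of power series in $t_1,\dots,t_s$ over $\mathbb{C}_\infty$ with coefficients tending to $0$. $\tau$ raises $\mathbb{C}_\infty$-coefficients to the $q$-th power; $\mathbb{T}_s[\tau]$, $\mathbb{T}_s[[\tau]]$ are twisted rings with $\tau f=f^{(1)}\tau$, acting by $\sum a_i\tau^i(f)=\sum a_if^{(i)}$. A Drinfeld $A[\underline{t}_s]$-module is an $\mathbb{F}_q[\underline{t}_s]$-algebra homomorphism $\phi:A[\underline{t}_s]\to\mathbb{T}_s[\tau]$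 with $\phi_\theta=\theta+A_1\tau+\dots+A_r\tau^r$. $\exp_\phi=\sum\alpha_i\tau^i$ is the unique series with $\alpha_0=1$, $\exp_\phi a=\phi_a\exp_\phi$; for constant $\phi$ its coefficients lie in $\mathbb{C}_\infty$ and it converges on $\mathbb{C}_\infty$ and on $\mathbb{T}_s$. *)

theory Defs
  imports "HOL-Computational_Algebra.Computational_Algebra"
begin

definition nonarch_absv :: "('k::field \<Rightarrow> real) \<Rightarrow> bool" where
  "nonarch_absv av \<longleftrightarrow>
     (\<forall>x. av x \<ge> 0) \<and> (\<forall>x. av x = 0 \<longleftrightarrow> x = 0) \<and>
     (\<forall>x y. av (x * y) = av x * av y) \<and>
     (\<forall>x y. av (x + y) \<le> max (av x) (av y))"

definition av_lim :: "('k::field \<Rightarrow> real) \<Rightarrow> (nat \<Rightarrow> 'k) \<Rightarrow> 'k \<Rightarrow> bool" where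
  "av_lim av x L \<longleftrightarrow> (\<forall>e>0. \<exists>N. \<forall>n\<ge>N. av (x n - L) < e)"

definition av_cauchy :: "('k::field \<Rightarrow> real) \<Rightarrow> (nat \<Rightarrow> 'k) \<Rightarrow> bool" where
  "av_cauchy av x \<longleftrightarrow> (\<forall>e>0. \<exists>N. \<forall>m\<ge>N. \<forall>n\<ge>N. av (x m - x n) < e)"

definition Fq :: "nat \<Rightarrow> 'k::field set" where
  "Fq q = {x. x ^ q = x}"

definition Aring :: "nat \<Rightarrow> 'k::field \<Rightarrow> 'k set" where
  "Aring q \<theta> = {poly P \<theta> | P. \<forall>i. coeff P i \<in> Fq q}"

text \<open>(K, av, q, theta) is (isometric, up to a power of the absolute value, to)
  C_infinity: K is a complete algebraically closed non-archimedean valued field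
  of characteristic p, q a power of p, with |theta| > 1, and the elements
  algebraic over F_q(theta) are dense in K.  Any such K is the completion of an
  algebraic closure of F_q((1/theta)).\<close>
definition is_Cinfty :: "('k::field \<Rightarrow> real) \<Rightarrow> nat \<Rightarrow> 'k \<Rightarrow> bool" where
  "is_Cinfty av q \<theta> \<longleftrightarrow>
     (\<exists>p e. prime p \<and> e > 0 \<and> q = p ^ e \<and> of_nat p = (0::'k)) \<and>
     nonarch_absv av \<and> av \<theta> > 1 \<and>
     (\<forall>x. av_cauchy av x \<longrightarrow> (\<exists>L. av_lim av x L)) \<and>
     (\<forall>P::'k poly. degree P > 0 \<longrightarrow> (\<exists>z. poly P z = 0)) \<and>
     (\<forall>z. \<exists>y. av_lim av y z \<and>
        (\<forall>n. \<exists>P::'k poly. P \<noteq> 0 \<and> (\<forall>i. coeff P i \<in> Aring q \<theta>) \<and> poly P (y n) = 0))"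

text \<open>Exponent vectors of monomials t_1^(m 0) ... t_s^(m (s-1)).\<close>
definition exps :: "nat \<Rightarrow> (nat \<Rightarrow> nat) set" where
  "exps s = {m. \<forall>i\<ge>s. m i = 0}"

definition tate :: "('k::field \<Rightarrow> real) \<Rightarrow> nat \<Rightarrow> ((nat \<Rightarrow> nat) \<Rightarrow> 'k) set" where
  "tate av s = {f. (\<forall>m. m \<notin> exps s \<longrightarrow> f m = 0) \<and>
                   (\<forall>e>0. finite {m \<in> exps s. av (f m) \<ge> e})}"

text \<open>Convergence in T_s for the Gauss norm (sup of coefficients).\<close>
definition tate_lim :: "('k::field \<Rightarrow> real) \<Rightarrow> (nat \<Rightarrow> (nat \<Rightarrow> nat) \<Rightarrow> 'k) \<Rightarrow> ((nat \<Rightarrow> nat) \<Rightarrow> 'k) \<Rightarrow> bool" where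
  "tate_lim av g L \<longleftrightarrow> (\<forall>e>0. \<exists>N. \<forall>n\<ge>N. \<forall>m. av (g n m - L m) < e)"

text \<open>Multiplication in T_s (Cauchy product; the index set is finite for
  exponents of finite support).\<close>
definition tmul :: "((nat \<Rightarrow> nat) \<Rightarrow> 'k::field) \<Rightarrow> ((nat \<Rightarrow> nat) \<Rightarrow> 'k) \<Rightarrow> (nat \<Rightarrow> nat) \<Rightarrow> 'k" where
  "tmul f g m = (\<Sum>(m1, m2) \<in> {(m1, m2). \<forall>i. m1 i + m2 i = m i}. f m1 * g m2)"

definition tconst :: "'k::field \<Rightarrow> (nat \<Rightarrow> nat) \<Rightarrow> 'k" where
  "tconst c m = (if m = (\<lambda>_. 0) then c else 0)"

definition Apoly :: "nat \<Rightarrow> 'k::field \<Rightarrow> nat \<Rightarrow> ((nat \<Rightarrow> nat) \<Rightarrow> 'k) set" where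
  "Apoly q \<theta> s = {f. (\<forall>m. m \<notin> exps s \<longrightarrow> f m = 0) \<and> finite {m. f m \<noteq> 0} \<and>
                      (\<forall>m. f m \<in> Aring q \<theta>)}"

text \<open>alpha is the coefficient sequence of exp_phi for phi_theta = theta + sum_{j=1}^r Ac j tau^j:
  alpha 0 = 1 and exp_phi theta = phi_theta exp_phi in C_infinity[[tau]].\<close>
definition is_exp_coeffs :: "nat \<Rightarrow> 'k::field \<Rightarrow> nat \<Rightarrow> (nat \<Rightarrow> 'k) \<Rightarrow> (nat \<Rightarrow> 'k) \<Rightarrow> bool" where
  "is_exp_coeffs q \<theta> r Ac \<alpha> \<longleftrightarrow> \<alpha> 0 = 1 \<and>
     (\<forall>i. \<alpha> i * \<theta> ^ (q ^ i) = \<theta> * \<alpha> i + (\<Sum>j\<in>{1..min r i}. Ac j * \<alpha> (i - j) ^ (q ^ j)))"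

definition exp_ker :: "('k::field \<Rightarrow> real) \<Rightarrow> nat \<Rightarrow> (nat \<Rightarrow> 'k) \<Rightarrow> 'k set" where
  "exp_ker av q \<alpha> = {z. av_lim av (\<lambda>n. \<Sum>i<n. \<alpha> i * z ^ (q ^ i)) 0}"

text \<open>Lambda_phi: kernel of exp_phi on T_s; tau acts on the C_infinity-coefficients.\<close>
definition tate_exp_ker :: "('k::field \<Rightarrow> real) \<Rightarrow> nat \<Rightarrow> nat \<Rightarrow> (nat \<Rightarrow> 'k) \<Rightarrow> ((nat \<Rightarrow> nat) \<Rightarrow> 'k) set" where
  "tate_exp_ker av q s \<alpha> = {f \<in> tate av s.
      tate_lim av (\<lambda>n m. \<Sum>i<n. \<alpha> i * f m ^ (q ^ i)) (\<lambda>_. 0)}"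

end

theory Submission
  imports Defs
begin

text \<open>A nonzero element of the period lattice has absolute value at least
  1/C, where C bounds 1 and all |A_j|: the recurrence for the coefficients of
  exp_phi gives |alpha_i| \<le> C^(q^i - 1), so for 0 < |z| < 1/C the linear term of
  exp_phi(z) strictly dominates all others and |exp_phi(z)| = |z|.  An element f
  of the kernel on T_s has all its coefficients f_m in the period lattice, and
  since they tend to 0 only finitely many of them are nonzero.  Expanding each
  f_m in the basis lambda_i gives coefficients in A[t_1,...,t_s], and
  independence follows coefficientwise.\<close>

locale valued_field =
  fixes av :: "'k::field \<Rightarrow> real"
  assumes nonarch: "nonarch_absv av"
begin

lemma av_nonneg [simp]: "0 \<le> av x"
  and av_eq_0_iff [simp]: "av x = 0 \<longleftrightarrow> x = 0"
  and av_mult: "av (x * y) = av x * av y"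
  and av_add_le: "av (x + y) \<le> max (av x) (av y)"
  using nonarch unfolding nonarch_absv_def by auto

lemma av_zero [simp]: "av 0 = 0"
  by simp

lemma av_pos: "x \<noteq> 0 \<Longrightarrow> 0 < av x"
  using av_nonneg[of x] av_eq_0_iff[of x] by linarith

lemma av_one [simp]: "av 1 = 1"
  using av_mult[of 1 1] av_pos[of 1] by simp

lemma av_power: "av (x ^ n) = av x ^ n"
  by (induction n) (simp_all add: av_mult)

lemma av_minus [simp]: "av (- x) = av x"
proof -
  have "av (- 1) ^ 2 = 1"
    using av_power[of "- 1" 2] by simp
  then have "av (- 1) = 1"
    using power_eq_imp_eq_base[of "av (- 1)" 2 1] by simp
  then show ?thesis
    using av_mult[of "- 1" x] by simp
qed

lemma av_add_eq_of_less:
  assumes "av y < av x"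
  shows "av (x + y) = av x"
proof -
  have "av (x + y) \<le> av x"
    using av_add_le[of x y] max_absorb1[of "av y" "av x"] assms by simp
  moreover have "av x \<le> max (av (x + y)) (av y)"
    using av_add_le[of "x + y" "- y"] by simp
  then have "av x \<le> av (x + y)"
    using assms by (auto simp: le_max_iff_disj)
  ultimately show ?thesis
    by simp
qed

lemma av_sum_le:
  assumes "finite F" "0 \<le> B" "\<And>j. j \<in> F \<Longrightarrow> av (g j) \<le> B"
  shows "av (sum g F) \<le> B"
  using assms(1,3)
proof (induction F rule: finite_induct)
  case empty
  show ?case
    using assms(2) by simp
next
  case (insert x F)
  have "av (g x) \<le> B"
    by (rule insert.prems) simp
  moreover have "av (sum g F) \<le> B"
    by (rule insert.IH) (rule insert.prems, simp)
  ultimately have "av (g x + sum g F) \<le> B"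
    by (rule order_trans[OF av_add_le max.boundedI])
  with insert.hyps show ?case
    by simp
qed

end

lemma tate_exp_ker_coeff:
  assumes "f \<in> tate_exp_ker av q s \<alpha>"
  shows "f m \<in> exp_ker av q \<alpha>"
  using assms unfolding tate_exp_ker_def tate_lim_def exp_ker_def av_lim_def by blast

lemma tate_exp_ker_finite_support:
  assumes f: "f \<in> tate_exp_ker av q s \<alpha>"
    and gap: "0 < \<delta>" "\<forall>z\<in>exp_ker av q \<alpha>. z \<noteq> 0 \<longrightarrow> \<delta> \<le> av z"
  shows "finite {m. f m \<noteq> 0}"
proof (rule finite_subset)
  have "f \<in> tate av s"
    using f unfolding tate_exp_ker_def by blast
  then show "{m. f m \<noteq> 0} \<subseteq> {m \<in> exps s. \<delta> \<le> av (f m)}"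
      and "finite {m \<in> exps s. \<delta> \<le> av (f m)}"
    using gap tate_exp_ker_coeff[OF f] unfolding tate_def by blast+
qed

lemma zero_mem_Aring: "0 < q \<Longrightarrow> 0 \<in> Aring q \<theta>"
  unfolding Aring_def Fq_def by (intro CollectI exI[of _ 0]) simp

lemma finite_exps_decompositions:
  assumes "m \<in> exps s"
  shows "finite {(m1, m2). \<forall>i. m1 i + m2 i = (m :: nat \<Rightarrow> nat) i}"
proof -
  define B where "B = {g :: nat \<Rightarrow> nat. \<forall>i. (i \<in> {..<s} \<longrightarrow> g i \<in> {..sum m {..<s}}) \<and>
                                      (i \<notin> {..<s} \<longrightarrow> g i = 0)}"
  have bounded_in_B: "g \<in> B" if g: "\<And>i. g i \<le> m i" for g
  proof -
    have "g i \<le> sum m {..<s}" if "i < s" for i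
      using g[of i] member_le_sum[of i "{..<s}" m] that by simp
    moreover have "g i = 0" if "\<not> i < s" for i
      using g[of i] assms that unfolding exps_def by simp
    ultimately show ?thesis
      unfolding B_def by simp
  qed
  have "{(m1, m2). \<forall>i. m1 i + m2 i = m i} \<subseteq> B \<times> B"
  proof clarify
    fix m1 m2 assume "\<forall>i. m1 i + m2 i = m i"
    then have "m1 i \<le> m i" "m2 i \<le> m i" for i
      by (metis le_add1, metis le_add2)
    then show "m1 \<in> B \<and> m2 \<in> B"
      by (simp add: bounded_in_B)
  qed
  moreover have "finite B"
    unfolding B_def by (intro finite_set_of_finite_funs) auto
  ultimately show ?thesis
    by (meson finite_SigmaI finite_subset)
qed

lemma tmul_tconst:
  assumes "\<forall>m. m \<notin> exps s \<longrightarrow> g m = 0"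
  shows "tmul g (tconst c) m = g m * c"
proof (cases "finite {(m1, m2). \<forall>i. m1 i + m2 i = m i}")
  case True
  have "tmul g (tconst c) m =
      (\<Sum>p\<in>{(m1, m2). \<forall>i. m1 i + m2 i = m i}. if p = (m, \<lambda>_. 0) then g m * c else 0)"
    unfolding tmul_def by (rule sum.cong) (auto simp: tconst_def fun_eq_iff split: if_splits)
  also have "\<dots> = g m * c"
    using True by simp
  finally show ?thesis .
next
  case False
  \<comment> \<open>the sum over an infinite index set is 0, and then m lies outside exps s\<close>
  then show ?thesis
    using assms finite_exps_decompositions unfolding tmul_def by auto
qed

lemma sum_tmul_tconst_Apoly:
  assumes "\<forall>i\<in>I. a i \<in> Apoly q \<theta> s"
  shows "(\<Sum>i\<in>I. tmul (a i) (tconst (c i)) m) = (\<Sum>i\<in>I. a i m * c i)"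
proof (rule sum.cong[OF refl])
  fix i assume "i \<in> I"
  then have "\<forall>m. m \<notin> exps s \<longrightarrow> a i m = 0"
    using assms unfolding Apoly_def by blast
  then show "tmul (a i) (tconst (c i)) m = a i m * c i"
    by (rule tmul_tconst)
qed

lemma Apoly_indep_of_Aring_indep:
  assumes indep: "\<forall>b. (\<forall>i\<in>I. b i \<in> Aring q \<theta>) \<and> (\<Sum>i\<in>I. b i * lam i) = 0 \<longrightarrow> (\<forall>i\<in>I. b i = 0)"
    and a: "\<forall>i\<in>I. a i \<in> Apoly q \<theta> s"
    and combination: "(\<lambda>m. \<Sum>i\<in>I. tmul (a i) (tconst (lam i)) m) = (\<lambda>_. 0)"
  shows "\<forall>i\<in>I. a i = (\<lambda>_. 0)"
proof (intro ballI ext)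
  fix i m
  assume "i \<in> I"
  have "(\<Sum>j\<in>I. a j m * lam j) = 0"
    using fun_cong[OF combination, of m] sum_tmul_tconst_Apoly[OF a] by simp
  moreover have "\<forall>j\<in>I. a j m \<in> Aring q \<theta>"
    using a unfolding Apoly_def by blast
  ultimately have "(\<forall>j\<in>I. a j m \<in> Aring q \<theta>) \<and> (\<Sum>j\<in>I. a j m * lam j) = 0"
    by blast
  then show "a i m = 0"
    by (rule indep[rule_format, OF _ \<open>i \<in> I\<close>])
qed

locale drinfeld_exp = valued_field av
  for av :: "'k::field \<Rightarrow> real" +
  fixes q :: nat and \<theta> :: 'k and r :: nat and Ac :: "nat \<Rightarrow> 'k" and \<alpha> :: "nat \<Rightarrow> 'k"
  assumes q_ge_2: "2 \<le> q"
    and av_theta: "1 < av \<theta>"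
    and exp_coeffs: "is_exp_coeffs q \<theta> r Ac \<alpha>"
begin

lemma exp_coeff_0 [simp]: "\<alpha> 0 = 1"
  using exp_coeffs unfolding is_exp_coeffs_def by simp

lemma q_power_ge_2: "0 < i \<Longrightarrow> 2 \<le> q ^ i"
  using q_ge_2 power_increasing[of 1 i q] by simp

lemma exp_coeff_recursion:
  "\<alpha> i * (\<theta> ^ (q ^ i) - \<theta>) = (\<Sum>j\<in>{1..min r i}. Ac j * \<alpha> (i - j) ^ (q ^ j))"
  using exp_coeffs unfolding is_exp_coeffs_def by (simp add: algebra_simps)

lemma av_theta_power_diff:
  assumes "0 < i"
  shows "av (\<theta> ^ (q ^ i) - \<theta>) = av \<theta> ^ (q ^ i)"
proof -
  have "av (- \<theta>) < av (\<theta> ^ (q ^ i))"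
    using av_theta q_power_ge_2[OF assms] power_strict_increasing[of 1 "q ^ i" "av \<theta>"]
    by (simp add: av_power)
  then show ?thesis
    using av_add_eq_of_less[of "- \<theta>" "\<theta> ^ (q ^ i)"] by (simp add: av_power)
qed

lemma power_bound_recursion_step:
  fixes C :: real
  assumes C: "1 \<le> C" and j: "1 \<le> j" "j \<le> i"
  shows "C * (C ^ (q ^ (i - j) - 1)) ^ q ^ j \<le> C ^ (q ^ i - 1)"
proof -
  have qj: "2 \<le> q ^ j" "q ^ j \<le> q ^ i"
    using j q_power_ge_2[of j] q_ge_2 by (auto intro: power_increasing)
  have "q ^ (i - j) * q ^ j = q ^ i"
    using j by (simp add: power_add[symmetric])
  then have exponent: "1 + (q ^ (i - j) - 1) * q ^ j = 1 + (q ^ i - q ^ j)"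
    by (simp add: diff_mult_distrib)
  have "C * (C ^ (q ^ (i - j) - 1)) ^ q ^ j = C ^ (1 + (q ^ (i - j) - 1) * q ^ j)"
    by (simp add: power_add power_mult)
  also have "\<dots> = C ^ (1 + (q ^ i - q ^ j))"
    by (simp only: exponent)
  also have "\<dots> \<le> C ^ (q ^ i - 1)"
    using C qj by (intro power_increasing) auto
  finally show ?thesis .
qed

lemma exp_coeff_bound:
  assumes C: "1 \<le> C" and AC: "\<And>j. j \<in> {1..r} \<Longrightarrow> av (Ac j) \<le> C"
  shows "av (\<alpha> i) \<le> C ^ (q ^ i - 1)"
proof (induction i rule: less_induct)
  case (less i)
  show ?case
  proof (cases "i = 0")
    case False
    have "av (\<Sum>j\<in>{1..min r i}. Ac j * \<alpha> (i - j) ^ (q ^ j)) \<le> C ^ (q ^ i - 1)"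
    proof (rule av_sum_le)
      fix j assume j: "j \<in> {1..min r i}"
      have "av (Ac j * \<alpha> (i - j) ^ q ^ j) = av (Ac j) * av (\<alpha> (i - j)) ^ q ^ j"
        by (simp add: av_mult av_power)
      also have "\<dots> \<le> C * (C ^ (q ^ (i - j) - 1)) ^ q ^ j"
        using AC less j C by (intro mult_mono power_mono) auto
      also have "\<dots> \<le> C ^ (q ^ i - 1)"
        using j by (intro power_bound_recursion_step C) auto
      finally show "av (Ac j * \<alpha> (i - j) ^ q ^ j) \<le> C ^ (q ^ i - 1)" .
    qed (use C in simp_all)
    then have "av (\<alpha> i * (\<theta> ^ (q ^ i) - \<theta>)) \<le> C ^ (q ^ i - 1)"
      by (simp only: exp_coeff_recursion)
    then have "av (\<alpha> i) * av \<theta> ^ (q ^ i) \<le> C ^ (q ^ i - 1)"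
      using av_theta_power_diff[of i] False by (simp add: av_mult)
    moreover have "av (\<alpha> i) * 1 \<le> av (\<alpha> i) * av \<theta> ^ (q ^ i)"
      using av_theta by (intro mult_left_mono one_le_power) auto
    ultimately show ?thesis
      by linarith
  qed simp
qed

lemma av_exp_partial_sum:
  assumes bound: "\<And>i. av (\<alpha> i) \<le> C ^ (q ^ i - 1)" and C: "1 \<le> C"
    and z: "z \<noteq> 0" and small: "C * av z < 1"
  shows "av (\<Sum>i<Suc n. \<alpha> i * z ^ (q ^ i)) = av z"
proof (induction n)
  case (Suc n)
  define k where "k = q ^ Suc n - 1"
  have k: "q ^ Suc n = Suc k" "1 \<le> k"
    using q_power_ge_2[of "Suc n"] unfolding k_def by linarith+
  have "av (\<alpha> (Suc n) * z ^ (q ^ Suc n)) \<le> C ^ k * av z ^ Suc k"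
    using bound[of "Suc n"] k by (simp add: av_mult av_power k_def mult_right_mono)
  also have "\<dots> = (C * av z) ^ k * av z"
    by (simp add: power_mult_distrib)
  also have "\<dots> < av z"
    using av_pos[OF z] small C k by (simp add: power_less_one_iff)
  finally show ?case
    using Suc av_add_eq_of_less by (simp add: add.commute)
qed simp

lemma exp_ker_discrete: "\<exists>\<delta>>0. \<forall>z\<in>exp_ker av q \<alpha>. z \<noteq> 0 \<longrightarrow> \<delta> \<le> av z"
proof -
  define C where "C = 1 + (\<Sum>j=1..r. av (Ac j))"
  have C: "1 \<le> C"
    unfolding C_def by (simp add: sum_nonneg)
  have "av (Ac j) \<le> C" if "j \<in> {1..r}" for j
    using that member_le_sum[of j "{1..r}" "\<lambda>j. av (Ac j)"] unfolding C_def by simp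
  then have bound: "av (\<alpha> i) \<le> C ^ (q ^ i - 1)" for i
    using exp_coeff_bound C by blast
  have "1 / C \<le> av z" if zk: "z \<in> exp_ker av q \<alpha>" and z: "z \<noteq> 0" for z
  proof (rule ccontr)
    assume "\<not> 1 / C \<le> av z"
    then have small: "C * av z < 1"
      using C by (simp add: field_simps)
    obtain N where "\<forall>n\<ge>N. av ((\<Sum>i<n. \<alpha> i * z ^ (q ^ i)) - 0) < av z"
      using zk av_pos[OF z] unfolding exp_ker_def av_lim_def by blast
    then have "av ((\<Sum>i<Suc N. \<alpha> i * z ^ (q ^ i)) - 0) < av z"
      using le_SucI[OF order_refl] by blast
    then show False
      using av_exp_partial_sum[OF bound C z small] by simp
  qed
  moreover have "0 < 1 / C"
    using C by simp
  ultimately show ?thesis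
    by blast
qed

lemma tconst_mem_tate_exp_ker:
  assumes "z \<in> exp_ker av q \<alpha>"
  shows "tconst z \<in> tate_exp_ker av q s \<alpha>"
proof -
  have "tconst z \<in> tate av s"
    unfolding tate_def tconst_def exps_def by (auto intro: finite_subset[of _ "{\<lambda>_. 0}"])
  moreover have "(\<Sum>i<n. \<alpha> i * tconst z m ^ (q ^ i)) = tconst (\<Sum>i<n. \<alpha> i * z ^ (q ^ i)) m" for n m
    using q_ge_2 unfolding tconst_def by (simp add: power_0_left)
  ultimately show ?thesis
    using assms unfolding tate_exp_ker_def tate_lim_def exp_ker_def av_lim_def
    by (simp add: tconst_def)
qed

lemma tate_exp_ker_Apoly_span:
  assumes span: "\<forall>z\<in>exp_ker av q \<alpha>. \<exists>b. (\<forall>i\<in>I. b i \<in> Aring q \<theta>) \<and> z = (\<Sum>i\<in>I. b i * lam i)"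
    and f: "f \<in> tate_exp_ker av q s \<alpha>"
  shows "\<exists>a. (\<forall>i\<in>I. a i \<in> Apoly q \<theta> s) \<and> f = (\<lambda>m. \<Sum>i\<in>I. tmul (a i) (tconst (lam i)) m)"
proof -
  have "\<forall>m. \<exists>b. f m \<noteq> 0 \<longrightarrow> (\<forall>i\<in>I. b i \<in> Aring q \<theta>) \<and> f m = (\<Sum>i\<in>I. b i * lam i)"
    using span tate_exp_ker_coeff[OF f] by blast
  then obtain b where b: "\<forall>m. f m \<noteq> 0 \<longrightarrow>
      (\<forall>i\<in>I. b m i \<in> Aring q \<theta>) \<and> f m = (\<Sum>i\<in>I. b m i * lam i)"
    by (rule choice[THEN exE])
  define a where "a i m = (if f m = 0 then 0 else b m i)" for i m
  obtain \<delta> where "0 < \<delta>" "\<forall>z\<in>exp_ker av q \<alpha>. z \<noteq> 0 \<longrightarrow> \<delta> \<le> av z"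
    using exp_ker_discrete by blast
  then have "finite {m. a i m \<noteq> 0}" for i
    using tate_exp_ker_finite_support[OF f] unfolding a_def by (auto elim: rev_finite_subset)
  moreover have "a i m = 0" if "m \<notin> exps s" for i m
    using f that unfolding tate_exp_ker_def tate_def a_def by simp
  moreover have "a i m \<in> Aring q \<theta>" if "i \<in> I" for i m
    using b that zero_mem_Aring[of q \<theta>] q_ge_2 unfolding a_def by simp
  ultimately have a_Apoly: "\<forall>i\<in>I. a i \<in> Apoly q \<theta> s"
    unfolding Apoly_def by blast
  have "f m = (\<Sum>i\<in>I. a i m * lam i)" for m
    using b[rule_format, of m] unfolding a_def by (cases "f m = 0") simp_all
  then have "f = (\<lambda>m. \<Sum>i\<in>I. tmul (a i) (tconst (lam i)) m)"
    using sum_tmul_tconst_Apoly[OF a_Apoly] by (simp add: fun_eq_iff)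
  with a_Apoly show ?thesis
    by blast
qed

end

lemma is_Cinfty_drinfeld_exp:
  assumes "is_Cinfty av q \<theta>" "is_exp_coeffs q \<theta> r Ac \<alpha>"
  shows "drinfeld_exp av q \<theta> r Ac \<alpha>"
proof
  obtain p e where "prime p" "0 < e" "q = p ^ e"
    using assms(1) unfolding is_Cinfty_def by blast
  then show "2 \<le> q"
    using prime_ge_2_nat[of p] power_increasing[of 1 e p] by simp
qed (use assms in \<open>auto simp: is_Cinfty_def\<close>)

theorem corollary8p3:
  fixes av :: "'k::field \<Rightarrow> real" and q :: nat and \<theta> :: 'k
    and s r :: nat and Ac :: "nat \<Rightarrow> 'k" and \<alpha> :: "nat \<Rightarrow> 'k" and lam :: "nat \<Rightarrow> 'k"
  assumes Cinf: "is_Cinfty av q \<theta>"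
    and r: "r \<ge> 1" and Ar: "Ac r \<noteq> 0"
    and exp: "is_exp_coeffs q \<theta> r Ac \<alpha>"
    and lam_ker: "\<forall>i\<in>{1..r}. lam i \<in> exp_ker av q \<alpha>"
    and lam_span: "\<forall>z\<in>exp_ker av q \<alpha>. \<exists>a. (\<forall>i\<in>{1..r}. a i \<in> Aring q \<theta>) \<and>
                      z = (\<Sum>i=1..r. a i * lam i)"
    and lam_indep: "\<forall>a. (\<forall>i\<in>{1..r}. a i \<in> Aring q \<theta>) \<and> (\<Sum>i=1..r. a i * lam i) = 0
                      \<longrightarrow> (\<forall>i\<in>{1..r}. a i = 0)"
  shows "(\<forall>i\<in>{1..r}. tconst (lam i) \<in> tate_exp_ker av q s \<alpha>) \<and>
         (\<forall>f\<in>tate_exp_ker av q s \<alpha>. \<exists>a. (\<forall>i\<in>{1..r}. a i \<in> Apoly q \<theta> s) \<and>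
             f = (\<lambda>m. \<Sum>i=1..r. tmul (a i) (tconst (lam i)) m)) \<and>
         (\<forall>a. (\<forall>i\<in>{1..r}. a i \<in> Apoly q \<theta> s) \<and>
             (\<lambda>m. \<Sum>i=1..r. tmul (a i) (tconst (lam i)) m) = (\<lambda>_. 0)
             \<longrightarrow> (\<forall>i\<in>{1..r}. a i = (\<lambda>_. 0)))"
proof -
  interpret drinfeld_exp av q \<theta> r Ac \<alpha>
    using is_Cinfty_drinfeld_exp[OF Cinf exp] .
  show ?thesis
    using tconst_mem_tate_exp_ker lam_ker tate_exp_ker_Apoly_span[OF lam_span]
      Apoly_indep_of_Aring_indep[OF lam_indep] by blast
qed

end
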